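(* Let $\mathbb G$ be a Carnot group, $j\in\{1,\dots,n_1\}$, and $f\in L_1(\mathbb G)$. Then (1) for $\mathcal H^{\nu-1}$-a.e. $p\in\Pi_j$ the function $t\mapsto f(p\exp(tX_j))$ is integrable on $\mathbb R$; (2) for a.e. $t\in\mathbb R$ the function $p\mapsto f(p\exp(tX_j))$ is $\mathcal H^{\nu-1}$-integrable on $\Pi_j$; (3) \[ \int_{\Pi_j}d\mathcal H^{\nu-1}(p)\int_{\mathbb R}f(p\exp(tX_j))\,dt=\int_{\mathbb R}dt\int_{\Pi_j}f(p\exp(tX_j))\,d\mathcal H^{\nu-1}(p)=\frac{\Theta_{\Pi_j}}{\Theta_{\mathbb G}}\int_{\mathbb G}f(x)\,d\mathcal H^\nu(x). \]
   Context: $\mathbb{G}$ is a Carnot group: a connected simply connected nilpotent Lie group whose Lie algebra $\mathfrak{g}$ of left-invariant vector fields splits as $\mathfrak{g}=V_1\oplus\dots\oplus V_m$ with $[V_1,V_k]=V_{k+1}$ ($V_{m+1}=\{0\}$); $n_k=\dim V_k$, $N=\dim\mathfrak g$. Fix a basis $X_1,\dots,X_N$ ordered by degree with each $V_k$ spanned by a subcollection, $\sigma_i=k$ if $X_i\in V_k$. Points are identified with canonical coordinates $(x_1,\dots,x_N)=\exp(\sum x_iX_i)(e)$; $\nu=\sum_i\sigma_i$. $\rho$ is the Carnot--Carath\'eodory distance determined by a scalar product on $V_1$; $\mathcal H^s$ denotes the spherical Hausdorff measure w.r.t. $\rho$ ($\mathcal H^s=\sup_\varepsilon\beta_s\inf\{\sum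 r_k^s: \text{covers by balls of radius } r_k\le\varepsilon\}$, normalizing constants $\beta_s>0$). $\mathcal H^\nu=\Theta_{\mathbb G}\mathcal L^N$ with $\mathcal L^N$ Lebesgue measure in coordinates, and $L_1(\mathbb G)$ refers to this measure. $\Pi_j=\{x: x_j=0\}$ for $j\le n_1$, and $\mathcal H^{\nu-1}=\Theta_{\Pi_j}\mathcal L^{N-1}$ on $\Pi_j$, with $\mathcal L^{N-1}$ Lebesgue measure on $\Pi_j$ in coordinates and $\Theta_{\Pi_j}>0$ a constant. *)

theory Defs
  imports "HOL-Analysis.Analysis"
begin

text \<open>A Carnot group is modelled in canonical (exponential) coordinates of the first
kind: the Lie algebra is R^N with basis e_0..e_(N-1) (0-based indices), bracket given by
structure constants c, degrees sigma, step m; the group law is the (finite, by nilpotency)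
Baker-Campbell-Hausdorff-Dynkin product. Points are extensional functions on {..<N}.\<close>

type_synonym vec = "nat \<Rightarrow> real"

definition lie_br :: "nat \<Rightarrow> (nat \<Rightarrow> nat \<Rightarrow> nat \<Rightarrow> real) \<Rightarrow> vec \<Rightarrow> vec \<Rightarrow> vec" where
  "lie_br N c x y = restrict (\<lambda>l. \<Sum>i<N. \<Sum>k<N. x i * y k * c i k l) {..<N}"

definition basis_vec :: "nat \<Rightarrow> nat \<Rightarrow> vec" where
  "basis_vec N i = restrict (\<lambda>l. if l = i then 1 else 0) {..<N}"

text \<open>Stratified nilpotent Lie algebra g = V_1 + ... + V_m, V_k spanned by the basis
vectors of degree k, basis ordered by degree, [V_1,V_k] = V_(k+1), V_(m+1) = 0.\<close>

definition carnot_algebra ::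
  "nat \<Rightarrow> nat \<Rightarrow> (nat \<Rightarrow> nat) \<Rightarrow> (nat \<Rightarrow> nat \<Rightarrow> nat \<Rightarrow> real) \<Rightarrow> bool" where
  "carnot_algebra N m \<sigma> c \<longleftrightarrow>
     1 \<le> m \<and>
     (\<forall>i<N. 1 \<le> \<sigma> i \<and> \<sigma> i \<le> m) \<and>
     (\<forall>i<N. \<forall>k<N. i \<le> k \<longrightarrow> \<sigma> i \<le> \<sigma> k) \<and>
     (\<forall>i<N. \<forall>k<N. \<forall>l<N. c i k l = - c k i l) \<and>
     (\<forall>i<N. \<forall>k<N. \<forall>r<N. \<forall>l<N.
        (\<Sum>s<N. c k r s * c i s l + c r i s * c k s l + c i k s * c r s l) = 0) \<and>
     (\<forall>k\<in>{1..m}. \<forall>i<N. \<forall>r<N. \<forall>l<N.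
        \<sigma> i = 1 \<and> \<sigma> r = k \<and> c i r l \<noteq> 0 \<longrightarrow> \<sigma> l = k + 1) \<and>
     (\<forall>k\<in>{1..m}. \<forall>l<N. \<sigma> l = k + 1 \<longrightarrow>
        (\<exists>a :: nat \<Rightarrow> nat \<Rightarrow> real. basis_vec N l =
            restrict (\<lambda>q. \<Sum>i<N. \<Sum>r<N.
               if \<sigma> i = 1 \<and> \<sigma> r = k
               then a i r * lie_br N c (basis_vec N i) (basis_vec N r) q else 0) {..<N}))"

text \<open>Right-nested bracket of a word in the letters X (True) and Y (False).\<close>

fun nest :: "nat \<Rightarrow> (nat \<Rightarrow> nat \<Rightarrow> nat \<Rightarrow> real) \<Rightarrow> vec \<Rightarrow> vec \<Rightarrow> bool list \<Rightarrow> vec" where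
  "nest N c x y [] = (\<lambda>_. 0)"
| "nest N c x y [b] = (if b then x else y)"
| "nest N c x y (b # w) = lie_br N c (if b then x else y) (nest N c x y w)"

definition dynkin_word :: "(nat \<times> nat) list \<Rightarrow> bool list" where
  "dynkin_word ps = concat (map (\<lambda>(r, s). replicate r True @ replicate s False) ps)"

definition dynkin_seqs :: "nat \<Rightarrow> nat \<Rightarrow> (nat \<times> nat) list set" where
  "dynkin_seqs m n = {ps. length ps = n \<and> (\<forall>(r, s)\<in>set ps. 0 < r + s)
                         \<and> sum_list (map (\<lambda>(r, s). r + s) ps) \<le> m}"

definition dynkin_coef :: "(nat \<times> nat) list \<Rightarrow> real" where
  "dynkin_coef ps = (-1) ^ (length ps - 1) / real (length ps)
      / (real (sum_list (map (\<lambda>(r, s). r + s) ps))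
         * prod_list (map (\<lambda>(r, s). fact r * fact s) ps))"

text \<open>Group law in exponential coordinates: log(exp x exp y) by Dynkin's formula,
truncated at bracket length m (longer brackets vanish in a step-m algebra).\<close>

definition gmul :: "nat \<Rightarrow> nat \<Rightarrow> (nat \<Rightarrow> nat \<Rightarrow> nat \<Rightarrow> real) \<Rightarrow> vec \<Rightarrow> vec \<Rightarrow> vec" where
  "gmul N m c x y = restrict (\<lambda>l. \<Sum>n\<in>{1..m}. \<Sum>ps\<in>dynkin_seqs m n.
       dynkin_coef ps * nest N c x y (dynkin_word ps) l) {..<N}"

text \<open>exp(t X_j) in canonical coordinates.\<close>

definition exp_coord :: "nat \<Rightarrow> nat \<Rightarrow> real \<Rightarrow> vec" where
  "exp_coord N j t = restrict (\<lambda>i. if i = j then t else 0) {..<N}"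

definition lebN :: "nat \<Rightarrow> vec measure" where
  "lebN N = completion (PiM {..<N} (\<lambda>_. lborel))"

definition Pi_plane :: "nat \<Rightarrow> nat \<Rightarrow> vec set" where
  "Pi_plane N j = {x \<in> space (PiM {..<N} (\<lambda>_. lborel)). x j = 0}"

definition lebPlane :: "nat \<Rightarrow> nat \<Rightarrow> vec measure" where
  "lebPlane N j = completion (distr (PiM ({..<N} - {j}) (\<lambda>_. lborel))
      (restrict_space (PiM {..<N} (\<lambda>_. lborel)) (Pi_plane N j)) (\<lambda>p. p(j := 0)))"

text \<open>H^nu = Theta_G L^N and H^(nu-1) = Theta_Pi L^(N-1) on Pi_j.\<close>

definition H_G :: "real \<Rightarrow> nat \<Rightarrow> vec measure" where
  "H_G \<Theta> N = density (lebN N) (\<lambda>_. ennreal \<Theta>)"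

definition H_Pi :: "real \<Rightarrow> nat \<Rightarrow> nat \<Rightarrow> vec measure" where
  "H_Pi \<Theta> N j = density (lebPlane N j) (\<lambda>_. ennreal \<Theta>)"

end

theory Submission
  imports Defs
begin

(* The structure constants are graded, c i k l \<noteq> 0 only if \<sigma> l = \<sigma> i + \<sigma> k, and the basis is
   ordered by degree; hence the l-th coordinate of a bracket, and so of every Dynkin term of length
   at least two, depends only on coordinates with index < l. In canonical coordinates the map
   y \<mapsto> y(j := 0) \<cdot> exp (y j X_j) is therefore the identity plus a strictly triangular perturbation,
   i.e. a composition of shears x_l \<mapsto> x_l + G(x_0, ..., x_(l-1)), each preserving Lebesgue measure.
   Composed with (q, t) \<mapsto> q(j := t) it carries L^(N-1) \<otimes> L^1 on \<Pi>_j \<times> R onto L^N, and the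
   statement becomes Fubini's theorem, transported to the completed measures and rescaled by the
   constant densities \<Theta>. *)

section \<open>Grading of the structure constants\<close>

lemma carnot_algebraD:
  assumes "carnot_algebra N m \<sigma> c"
  shows carnot_algebra_step_pos: "1 \<le> m"
    and carnot_algebra_degree_bounds [rule_format]: "\<forall>i<N. 1 \<le> \<sigma> i \<and> \<sigma> i \<le> m"
    and carnot_algebra_degree_mono [rule_format]: "\<forall>i<N. \<forall>k<N. i \<le> k \<longrightarrow> \<sigma> i \<le> \<sigma> k"
    and carnot_algebra_antisym [rule_format]: "\<forall>i<N. \<forall>k<N. \<forall>l<N. c i k l = - c k i l"
    and carnot_algebra_jacobi [rule_format]: "\<forall>i<N. \<forall>k<N. \<forall>r<N. \<forall>l<N.
      (\<Sum>s<N. c k r s * c i s l + c r i s * c k s l + c i k s * c r s l) = 0"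
    and carnot_algebra_bracket_layer [rule_format]: "\<forall>k\<in>{1..m}. \<forall>i<N. \<forall>r<N. \<forall>l<N.
      \<sigma> i = 1 \<and> \<sigma> r = k \<and> c i r l \<noteq> 0 \<longrightarrow> \<sigma> l = k + 1"
    and carnot_algebra_generated [rule_format]: "\<forall>k\<in>{1..m}. \<forall>l<N. \<sigma> l = k + 1 \<longrightarrow>
      (\<exists>a :: nat \<Rightarrow> nat \<Rightarrow> real. basis_vec N l =
        restrict (\<lambda>q. \<Sum>i<N. \<Sum>r<N. if \<sigma> i = 1 \<and> \<sigma> r = k
          then a i r * lie_br N c (basis_vec N i) (basis_vec N r) q else 0) {..<N})"
  using assms[unfolded carnot_algebra_def] by - (elim conjE, assumption)+

lemma lie_br_basis_vec:
  assumes "i < N" "r < N" "q < N"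
  shows "lie_br N c (basis_vec N i) (basis_vec N r) q = c i r q"
proof -
  have "lie_br N c (basis_vec N i) (basis_vec N r) q
      = (\<Sum>i'<N. basis_vec N i i' * (\<Sum>k<N. basis_vec N r k * c i' k q))"
    using assms by (simp add: lie_br_def mult.assoc sum_distrib_left)
  also have "\<dots> = c i r q"
    using assms by (simp add: basis_vec_def if_distrib[of "\<lambda>x. x * _"] cong: if_cong)
  finally show ?thesis .
qed

lemma carnot_algebra_upper_layer_span:
  assumes "carnot_algebra N m \<sigma> c" and "b \<in> {1..m}" "l < N" "\<sigma> l = b + 1"
  obtains a where "\<And>q. q < N \<Longrightarrow> (if q = l then 1 else 0)
    = (\<Sum>i<N. \<Sum>r<N. if \<sigma> i = 1 \<and> \<sigma> r = b then a i r * c i r q else 0)"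
proof -
  obtain a where a: "basis_vec N l = restrict (\<lambda>q. \<Sum>i<N. \<Sum>r<N. if \<sigma> i = 1 \<and> \<sigma> r = b
      then a i r * lie_br N c (basis_vec N i) (basis_vec N r) q else 0) {..<N}"
    using carnot_algebra_generated[OF assms] by blast
  have "(if q = l then 1 else 0)
      = (\<Sum>i<N. \<Sum>r<N. if \<sigma> i = 1 \<and> \<sigma> r = b then a i r * c i r q else 0)" if "q < N" for q
  proof -
    have "(if q = l then 1 else 0) = (\<Sum>i<N. \<Sum>r<N. if \<sigma> i = 1 \<and> \<sigma> r = b
        then a i r * lie_br N c (basis_vec N i) (basis_vec N r) q else 0)"
      using fun_cong[OF a, of q] that by (simp add: basis_vec_def)
    also have "\<dots> = (\<Sum>i<N. \<Sum>r<N. if \<sigma> i = 1 \<and> \<sigma> r = b then a i r * c i r q else 0)"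
      using that by (intro sum.cong refl) (simp add: lie_br_basis_vec)
    finally show ?thesis .
  qed
  then show ?thesis by (rule that)
qed

lemma carnot_algebra_first_layer_bracket_degree:
  assumes ca: "carnot_algebra N m \<sigma> c" and "i < N" "k < N" "l < N" "\<sigma> i = 1" "c i k l \<noteq> 0"
  shows "\<sigma> l = \<sigma> i + \<sigma> k"
  using carnot_algebra_bracket_layer[OF ca, of "\<sigma> k" i k l] carnot_algebra_degree_bounds[OF ca assms(3)]
    assms(2-6) by auto

lemma carnot_algebra_double_bracket_vanishes:
  assumes ca: "carnot_algebra N m \<sigma> c"
    and idx: "i < N" "r < N" "k < N" "l < N" and i: "\<sigma> i = 1"
    and deg_rk: "\<And>s. s < N \<Longrightarrow> c r k s \<noteq> 0 \<Longrightarrow> \<sigma> s = \<sigma> r + \<sigma> k"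
    and deg_rs: "\<And>s. s < N \<Longrightarrow> c r s l \<noteq> 0 \<Longrightarrow> \<sigma> l = \<sigma> r + \<sigma> s"
    and off_degree: "\<sigma> l \<noteq> 1 + \<sigma> r + \<sigma> k"
  shows "(\<Sum>q<N. c i r q * c q k l) = 0"
proof -
  \<comment> \<open>by Jacobi, \<open>[[e\<^sub>i, e\<^sub>r], e\<^sub>k] = - [[e\<^sub>r, e\<^sub>k], e\<^sub>i] - [[e\<^sub>k, e\<^sub>i], e\<^sub>r]\<close>,
     and both terms on the right vanish for degree reasons\<close>
  have ki: "c k i s * c r s l = 0" if "s < N" for s
  proof (rule ccontr)
    assume "c k i s * c r s l \<noteq> 0"
    then have "c i k s \<noteq> 0" "c r s l \<noteq> 0"
      using carnot_algebra_antisym[OF ca idx(3,1) that] by auto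
    then show False
      using carnot_algebra_first_layer_bracket_degree[OF ca idx(1,3) that i] deg_rs[OF that]
        i off_degree by auto
  qed
  have rk: "c r k s * c i s l = 0" if "s < N" for s
  proof (rule ccontr)
    assume "c r k s * c i s l \<noteq> 0"
    then have "c r k s \<noteq> 0" "c i s l \<noteq> 0" by auto
    then show False
      using deg_rk[OF that] carnot_algebra_first_layer_bracket_degree[OF ca idx(1) that idx(4) i]
        i off_degree by auto
  qed
  have "(\<Sum>s<N. c i r s * c k s l) = 0"
    using carnot_algebra_jacobi[OF ca idx(2,3,1,4)] ki rk by simp
  moreover have "(\<Sum>q<N. c i r q * c q k l) = - (\<Sum>q<N. c i r q * c k q l)"
    using carnot_algebra_antisym[OF ca _ idx(3,4)] by (simp add: sum_negf[symmetric])
  ultimately show ?thesis by simp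
qed

lemma carnot_algebra_bracket_degree:
  assumes ca: "carnot_algebra N m \<sigma> c"
  shows "i < N \<Longrightarrow> k < N \<Longrightarrow> l < N \<Longrightarrow> c i k l \<noteq> 0 \<Longrightarrow> \<sigma> l = \<sigma> i + \<sigma> k"
proof (induction "\<sigma> i" arbitrary: i k l rule: less_induct)
  case less
  show ?case
  proof (cases "\<sigma> i = 1")
    case True
    then show ?thesis using carnot_algebra_first_layer_bracket_degree[OF ca less.prems(1-3)] less.prems(4) by blast
  next
    case False
    then obtain b where b: "\<sigma> i = b + 1" "b \<in> {1..m}"
      using carnot_algebra_degree_bounds[OF ca less.prems(1)] by (cases "\<sigma> i") force+
    obtain a where span: "\<And>q. q < N \<Longrightarrow> (if q = i then 1 else 0)
        = (\<Sum>i'<N. \<Sum>r<N. if \<sigma> i' = 1 \<and> \<sigma> r = b then a i' r * c i' r q else 0)"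
      using carnot_algebra_upper_layer_span[OF ca b(2) less.prems(1) b(1)] by blast
    show ?thesis
    proof (rule ccontr)
      assume off_degree: "\<sigma> l \<noteq> \<sigma> i + \<sigma> k"
      have vanish: "(\<Sum>q<N. c i' r q * c q k l) = 0"
        if "i' < N" "r < N" "\<sigma> i' = 1" "\<sigma> r = b" for i' r
        using that b off_degree less.prems(2,3)
        by (intro carnot_algebra_double_bracket_vanishes[OF ca that(1,2) less.prems(2,3) that(3)])
           (auto intro: less.hyps)
      \<comment> \<open>expand \<open>e\<^sub>i\<close> as a combination of brackets \<open>[e\<^sub>i\<^sub>', e\<^sub>r]\<close> of lower degree\<close>
      have "c i k l = (\<Sum>q<N. (if q = i then 1 else 0) * c q k l)"
        using less.prems by (simp add: if_distrib[of "\<lambda>x. x * _"] cong: if_cong)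
      also have "\<dots> = (\<Sum>q<N. \<Sum>i'<N. \<Sum>r<N.
          (if \<sigma> i' = 1 \<and> \<sigma> r = b then a i' r * c i' r q else 0) * c q k l)"
        by (simp add: span sum_distrib_right)
      also have "\<dots> = (\<Sum>i'<N. \<Sum>r<N. \<Sum>q<N.
          (if \<sigma> i' = 1 \<and> \<sigma> r = b then a i' r * c i' r q else 0) * c q k l)"
        by (rule trans[OF sum.swap sum.cong[OF refl sum.swap]])
      also have "\<dots> = (\<Sum>i'<N. \<Sum>r<N. if \<sigma> i' = 1 \<and> \<sigma> r = b
          then a i' r * (\<Sum>q<N. c i' r q * c q k l) else 0)"
        by (intro sum.cong refl) (auto simp: sum_distrib_left mult.assoc)
      also have "\<dots> = 0"
        using vanish by (simp add: sum.neutral)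
      finally show False using less.prems(4) by simp
    qed
  qed
qed

section \<open>Triangularity of the group law\<close>

lemma carnot_algebra_bracket_index_less:
  assumes ca: "carnot_algebra N m \<sigma> c" and "i < N" "k < N" "l < N" "c i k l \<noteq> 0"
  shows "i < l \<and> k < l"
proof -
  have "\<sigma> l = \<sigma> i + \<sigma> k" using carnot_algebra_bracket_degree[OF ca assms(2-5)] .
  moreover have "1 \<le> \<sigma> i" "1 \<le> \<sigma> k"
    using carnot_algebra_degree_bounds[OF ca] assms(2,3) by auto
  ultimately show ?thesis
    using carnot_algebra_degree_mono[OF ca, of l i] carnot_algebra_degree_mono[OF ca, of l k] assms(2-4)
    by fastforce
qed

lemma lie_br_cong_lower:
  assumes ca: "carnot_algebra N m \<sigma> c" and agree: "\<And>i. i < l \<Longrightarrow> x i = x' i \<and> y i = y' i"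
  shows "lie_br N c x y l = lie_br N c x' y' l"
proof (cases "l < N")
  case True
  have "x i * y k * c i k l = x' i * y' k * c i k l" if "i < N" "k < N" for i k
    using carnot_algebra_bracket_index_less[OF ca that True] agree by (cases "c i k l = 0") auto
  then have "(\<Sum>i<N. \<Sum>k<N. x i * y k * c i k l) = (\<Sum>i<N. \<Sum>k<N. x' i * y' k * c i k l)"
    by (intro sum.cong refl) simp
  with True show ?thesis by (simp add: lie_br_def)
qed (simp add: lie_br_def)

lemma nest_cong_le:
  assumes ca: "carnot_algebra N m \<sigma> c"
  shows "w \<noteq> [] \<Longrightarrow> (\<And>i. i \<le> l \<Longrightarrow> x i = x' i \<and> y i = y' i)
    \<Longrightarrow> nest N c x y w l = nest N c x' y' w l"
proof (induction w arbitrary: l)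
  case (Cons b w)
  show ?case
  proof (cases w)
    case Nil
    then show ?thesis using Cons.prems(2)[of l] by simp
  next
    case (Cons v u)
    have "lie_br N c (if b then x else y) (nest N c x y w) l
        = lie_br N c (if b then x' else y') (nest N c x' y' w) l"
    proof (rule lie_br_cong_lower[OF ca])
      fix i assume "i < l"
      then show "(if b then x else y) i = (if b then x' else y') i
          \<and> nest N c x y w i = nest N c x' y' w i"
        using Cons.prems(2) Cons.IH[of i] \<open>w = v # u\<close> by simp
    qed
    then show ?thesis using Cons by simp
  qed
qed simp

lemma nest_cong_lower:
  assumes ca: "carnot_algebra N m \<sigma> c" and "2 \<le> length w"
    and agree: "\<And>i. i < l \<Longrightarrow> x i = x' i \<and> y i = y' i"
  shows "nest N c x y w l = nest N c x' y' w l"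
proof -
  obtain b v u where w: "w = b # v # u"
    using assms(2) by (cases w rule: remdups_adj.cases) auto
  have "lie_br N c (if b then x else y) (nest N c x y (v # u)) l
      = lie_br N c (if b then x' else y') (nest N c x' y' (v # u)) l"
  proof (rule lie_br_cong_lower[OF ca])
    fix i assume "i < l"
    then show "(if b then x else y) i = (if b then x' else y') i
        \<and> nest N c x y (v # u) i = nest N c x' y' (v # u) i"
      using agree nest_cong_le[OF ca, of "v # u" i x x' y y'] by simp
  qed
  then show ?thesis by (simp add: w)
qed

lemma length_dynkin_word: "length (dynkin_word ps) = sum_list (map (\<lambda>(r, s). r + s) ps)"
  by (induction ps) (auto simp: dynkin_word_def)

lemma finite_dynkin_seqs: "finite (dynkin_seqs m n)"
proof (rule finite_subset)
  show "dynkin_seqs m n \<subseteq> {ps. set ps \<subseteq> {0..m} \<times> {0..m} \<and> length ps = n}"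
  proof safe
    fix ps r s assume ps: "ps \<in> dynkin_seqs m n" and "(r, s) \<in> set ps"
    then have "r + s \<le> sum_list (map (\<lambda>(r, s). r + s) ps)"
      by (intro member_le_sum_list) force+
    then show "r \<in> {0..m}" "s \<in> {0..m}" using ps by (auto simp: dynkin_seqs_def)
  qed (simp add: dynkin_seqs_def)
qed (rule finite_lists_length_eq, simp)

lemma length_dynkin_word_ge_2:
  assumes "ps \<in> dynkin_seqs m n" "1 \<le> n" "ps \<notin> {[(1, 0)], [(0, 1)]}"
  shows "2 \<le> length (dynkin_word ps)"
proof -
  have pos: "\<forall>(r, s)\<in>set ps. 0 < r + s" "length ps = n"
    using assms(1) by (auto simp: dynkin_seqs_def)
  then obtain r s rest where ps: "ps = (r, s) # rest" "0 < r + s"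
    using assms(2) by (cases ps) auto
  show ?thesis
  proof (cases rest)
    case Nil
    then show ?thesis using ps assms(3) by (auto simp: length_dynkin_word)
  next
    case (Cons p rest')
    then show ?thesis using ps pos by (cases p) (auto simp: length_dynkin_word)
  qed
qed

lemma gmul_eq_linear_plus_higher:
  assumes "1 \<le> m" "l < N"
  shows "gmul N m c x y l = x l + y l + (\<Sum>n\<in>{1..m}. \<Sum>ps\<in>dynkin_seqs m n - {[(1, 0)], [(0, 1)]}.
    dynkin_coef ps * nest N c x y (dynkin_word ps) l)"
proof -
  let ?L = "{[(1::nat, 0::nat)], [(0, 1)]}"
  let ?a = "\<lambda>ps. dynkin_coef ps * nest N c x y (dynkin_word ps) l"
  have "(\<Sum>ps\<in>dynkin_seqs m n \<inter> ?L. ?a ps) = (if n = 1 then x l + y l else 0)" for n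
  proof -
    have "dynkin_seqs m n \<inter> ?L = (if n = 1 then ?L else {})"
      using assms(1) by (auto simp: dynkin_seqs_def)
    then show ?thesis by (simp add: dynkin_coef_def dynkin_word_def)
  qed
  then have "(\<Sum>n\<in>{1..m}. \<Sum>ps\<in>dynkin_seqs m n \<inter> ?L. ?a ps) = x l + y l"
    using assms(1) by simp
  then show ?thesis
    using assms(2) by (simp add: gmul_def sum.Int_Diff[OF finite_dynkin_seqs, of _ _ _ ?L] sum.distrib)
qed

lemma gmul_sub_cong_lower:
  assumes ca: "carnot_algebra N m \<sigma> c" and "l < N"
    and agree: "\<And>i. i < l \<Longrightarrow> x i = x' i \<and> y i = y' i"
  shows "gmul N m c x y l - x l - y l = gmul N m c x' y' l - x' l - y' l"
proof -
  have "nest N c x y (dynkin_word ps) l = nest N c x' y' (dynkin_word ps) l"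
    if "n \<in> {1..m}" "ps \<in> dynkin_seqs m n - {[(1, 0)], [(0, 1)]}" for n ps
    using that by (intro nest_cong_lower[OF ca _ agree] length_dynkin_word_ge_2) auto
  then show ?thesis
    using assms(2) by (simp add: gmul_eq_linear_plus_higher[OF carnot_algebra_step_pos[OF ca]])
qed

abbreviation lborel_PiM :: "'i set \<Rightarrow> ('i \<Rightarrow> real) measure" where
  "lborel_PiM I \<equiv> PiM I (\<lambda>_. lborel)"

lemma measurable_lborel_PiM_componentwise:
  assumes "\<And>i. i \<in> I \<Longrightarrow> (\<lambda>\<omega>. f \<omega> i) \<in> borel_measurable M"
    and "\<And>\<omega>. \<omega> \<in> space M \<Longrightarrow> f \<omega> \<in> extensional I"
  shows "f \<in> measurable M (lborel_PiM I)"
proof -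
  have "(\<lambda>\<omega> i. f \<omega> i) \<in> measurable M (lborel_PiM I)"
    by (rule measurable_PiM_single') (use assms in \<open>auto simp: PiE_def\<close>)
  then show ?thesis by simp
qed

lemma measurable_lie_br_component:
  assumes "\<And>i. i < N \<Longrightarrow> (\<lambda>\<omega>. u \<omega> i) \<in> borel_measurable M"
    and "\<And>i. i < N \<Longrightarrow> (\<lambda>\<omega>. v \<omega> i) \<in> borel_measurable M"
  shows "(\<lambda>\<omega>. lie_br N c (u \<omega>) (v \<omega>) l) \<in> borel_measurable M"
proof (cases "l < N")
  case True
  have "(\<lambda>\<omega>. \<Sum>i<N. \<Sum>k<N. u \<omega> i * v \<omega> k * c i k l) \<in> borel_measurable M"
    using assms by (intro borel_measurable_sum borel_measurable_times) auto
  with True show ?thesis by (simp add: lie_br_def)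
qed (simp add: lie_br_def)

lemma measurable_nest_component:
  assumes "\<And>i. i < N \<Longrightarrow> (\<lambda>\<omega>. u \<omega> i) \<in> borel_measurable M"
    and "\<And>i. i < N \<Longrightarrow> (\<lambda>\<omega>. v \<omega> i) \<in> borel_measurable M"
  shows "l < N \<Longrightarrow> (\<lambda>\<omega>. nest N c (u \<omega>) (v \<omega>) w l) \<in> borel_measurable M"
proof (induction w arbitrary: l)
  case (Cons b w)
  show ?case
  proof (cases w)
    case Nil
    then show ?thesis using assms Cons.prems by (cases b) auto
  next
    case (Cons v' u')
    have "(\<lambda>\<omega>. lie_br N c (if b then u \<omega> else v \<omega>) (nest N c (u \<omega>) (v \<omega>) w) l) \<in> borel_measurable M"
      by (rule measurable_lie_br_component) (use assms Cons.IH in \<open>cases b; auto\<close>)+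
    then show ?thesis using Cons by simp
  qed
qed simp

lemma measurable_gmul:
  assumes "\<And>i. i < N \<Longrightarrow> (\<lambda>\<omega>. u \<omega> i) \<in> borel_measurable M"
    and "\<And>i. i < N \<Longrightarrow> (\<lambda>\<omega>. v \<omega> i) \<in> borel_measurable M"
  shows "(\<lambda>\<omega>. gmul N m c (u \<omega>) (v \<omega>)) \<in> measurable M (lborel_PiM {..<N})"
proof (rule measurable_lborel_PiM_componentwise)
  fix l assume "l \<in> {..<N}"
  then have "(\<lambda>\<omega>. \<Sum>n\<in>{1..m}. \<Sum>ps\<in>dynkin_seqs m n.
      dynkin_coef ps * nest N c (u \<omega>) (v \<omega>) (dynkin_word ps) l) \<in> borel_measurable M"
    using measurable_nest_component[OF assms] by (intro borel_measurable_sum borel_measurable_times) auto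
  with \<open>l \<in> {..<N}\<close> show "(\<lambda>\<omega>. gmul N m c (u \<omega>) (v \<omega>) l) \<in> borel_measurable M"
    by (simp add: gmul_def)
qed (simp add: gmul_def)

section \<open>Measure-preserving maps of coordinate space\<close>

lemma lborel_PiM_shear_measure_preserving:
  fixes G :: "('i \<Rightarrow> real) \<Rightarrow> real"
  assumes I: "finite I" "k \<in> I" and G[measurable]: "G \<in> borel_measurable (lborel_PiM I)"
    and G_indep: "\<And>z t. G (z(k := t)) = G z"
  shows "(\<lambda>z. z(k := z k + G z)) \<in> measurable (lborel_PiM I) (lborel_PiM I)"
    and "distr (lborel_PiM I) (lborel_PiM I) (\<lambda>z. z(k := z k + G z)) = lborel_PiM I"
proof -
  interpret product_sigma_finite "\<lambda>_::'i. lborel :: real measure" by standard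
  let ?S = "\<lambda>z. z(k := z k + G z)"
  define K where "K = I - {k}"
  have IK: "I = insert k K" "finite K" "k \<notin> K" using I by (auto simp: K_def)
  show S: "?S \<in> measurable (lborel_PiM I) (lborel_PiM I)"
    using I(2) by (intro measurable_lborel_PiM_componentwise)
      (auto simp: space_PiM PiE_def extensional_def)
  show "distr (lborel_PiM I) (lborel_PiM I) ?S = lborel_PiM I"
  proof (rule measure_eqI)
    fix A assume "A \<in> sets (distr (lborel_PiM I) (lborel_PiM I) ?S)"
    then have A[measurable]: "A \<in> sets (lborel_PiM I)" by simp
    \<comment> \<open>on each line parallel to the \<open>k\<close>-th axis, \<open>?S\<close> is a translation\<close>
    have translate: "(\<integral>\<^sup>+ y. indicator A (?S (x(k := y))) \<partial>lborel) = (\<integral>\<^sup>+ y. indicator A (x(k := y)) \<partial>lborel)"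
      if x: "x \<in> space (lborel_PiM K)" for x
    proof -
      have "(\<lambda>y. x(k := y)) \<in> measurable borel (lborel_PiM I)"
        using measurable_component_update[OF x IK(3)] IK(1) by simp
      then have "(\<lambda>y. indicator A (x(k := y)) :: ennreal) \<in> borel_measurable borel" by measurable
      from nn_integral_real_affine[OF this, of 1 "G x"] show ?thesis
        by (simp add: G_indep add.commute)
    qed
    have "emeasure (distr (lborel_PiM I) (lborel_PiM I) ?S) A
        = (\<integral>\<^sup>+ z. indicator A z \<partial>distr (lborel_PiM I) (lborel_PiM I) ?S)"
      by simp
    also have "\<dots> = (\<integral>\<^sup>+ z. indicator A (?S z) \<partial>lborel_PiM I)"
      by (rule nn_integral_distr[OF S]) simp
    also have "\<dots> = (\<integral>\<^sup>+ x. (\<integral>\<^sup>+ y. indicator A (?S (x(k := y))) \<partial>lborel) \<partial>lborel_PiM K)"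
    proof -
      have "(\<lambda>z. indicator A (?S z) :: ennreal) \<in> borel_measurable (lborel_PiM I)"
        using S by measurable
      then show ?thesis
        unfolding IK(1) by (rule product_nn_integral_insert[OF IK(2,3)])
    qed
    also have "\<dots> = (\<integral>\<^sup>+ x. (\<integral>\<^sup>+ y. indicator A (x(k := y)) \<partial>lborel) \<partial>lborel_PiM K)"
      by (rule nn_integral_cong) (rule translate)
    also have "\<dots> = (\<integral>\<^sup>+ z. indicator A z \<partial>lborel_PiM I)"
      using A unfolding IK(1) by (subst product_nn_integral_insert[OF IK(2,3)]) simp_all
    also have "\<dots> = emeasure (lborel_PiM I) A"
      using A by simp
    finally show "emeasure (distr (lborel_PiM I) (lborel_PiM I) ?S) A = emeasure (lborel_PiM I) A" .
  qed simp
qed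

lemma lborel_PiM_triangular_measure_preserving:
  fixes T :: "(nat \<Rightarrow> real) \<Rightarrow> nat \<Rightarrow> real"
  assumes T: "T \<in> measurable (lborel_PiM {..<N}) (lborel_PiM {..<N})"
    and triangular: "\<And>l y y'. l < N \<Longrightarrow> (\<And>i. i < l \<Longrightarrow> y i = y' i) \<Longrightarrow> T y l - y l = T y' l - y' l"
  shows "distr (lborel_PiM {..<N}) (lborel_PiM {..<N}) T = lborel_PiM {..<N}"
proof -
  let ?M = "lborel_PiM {..<N}"
  \<comment> \<open>\<open>H n\<close> applies \<open>T\<close> to the coordinates \<open>\<ge> n\<close> only; it is obtained from \<open>H (Suc n)\<close> by a shear\<close>
  define H where "H n y = restrict (\<lambda>l. if n \<le> l then T y l else y l) {..<N}" for n y
  have T_component[measurable]: "(\<lambda>y. T y l) \<in> borel_measurable ?M" if "l < N" for l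
    using measurable_compose[OF T measurable_component_singleton, of l] that by simp
  have H_meas: "H n \<in> measurable ?M ?M" for n
    unfolding H_def by (rule measurable_restrict) simp
  have "distr ?M ?M (H n) = ?M" if "n \<le> N" for n
    using that
  proof (induction n rule: inc_induct)
    case base
    have "distr ?M ?M (H N) = distr ?M ?M (\<lambda>y. y)"
      by (rule distr_cong) (auto simp: H_def space_PiM PiE_def extensional_def)
    then show ?case by simp
  next
    case (step n)
    define G where "G z = T z n - z n" for z
    have "(\<lambda>z. z n) \<in> borel_measurable ?M" using step.hyps by simp
    then have G_meas: "G \<in> borel_measurable ?M"
      unfolding G_def using T_component[of n] step.hyps by (intro borel_measurable_diff) auto
    have G_indep: "G (z(n := t)) = G z" for z t
      unfolding G_def by (rule triangular) (use step.hyps in auto)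
    note shear = lborel_PiM_shear_measure_preserving[of "{..<N}" n G, OF _ _ G_meas G_indep]
    have "H n y = (\<lambda>z. z(n := z n + G z)) (H (Suc n) y)" if "y \<in> space ?M" for y
    proof -
      have "G (H (Suc n) y) = G y"
        unfolding G_def by (rule triangular) (use step.hyps in \<open>auto simp: H_def\<close>)
      then show ?thesis using step.hyps by (auto simp: H_def G_def)
    qed
    then have "distr ?M ?M (H n) = distr (distr ?M ?M (H (Suc n))) ?M (\<lambda>z. z(n := z n + G z))"
      using shear(1) step.hyps H_meas by (subst distr_distr) (auto intro!: distr_cong)
    then show ?case using step.IH shear(2) step.hyps by simp
  qed
  moreover have "distr ?M ?M T = distr ?M ?M (H 0)"
    using T[THEN measurable_space]
    by (intro distr_cong) (auto simp: H_def space_PiM PiE_def extensional_def)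
  ultimately show ?thesis by simp
qed

lemma lborel_PiM_insert_measure_preserving:
  assumes I: "finite I" "j \<in> I"
  shows "(\<lambda>(q, t). q(j := t)) \<in> measurable (lborel_PiM (I - {j}) \<Otimes>\<^sub>M lborel) (lborel_PiM I)"
    and "distr (lborel_PiM (I - {j}) \<Otimes>\<^sub>M lborel) (lborel_PiM I) (\<lambda>(q, t). q(j := t)) = lborel_PiM I"
proof -
  interpret product_sigma_finite "\<lambda>_::'i. lborel :: real measure" by standard
  define K where "K = I - {j}"
  have IK: "I = insert j K" "finite K" "j \<notin> K" using I by (auto simp: K_def)
  interpret K: sigma_finite_measure "lborel_PiM K" by (rule sigma_finite) (rule IK(2))
  interpret pair_sigma_finite "lborel_PiM K" lborel ..
  show E: "(\<lambda>(q, t). q(j := t)) \<in> measurable (lborel_PiM (I - {j}) \<Otimes>\<^sub>M lborel) (lborel_PiM I)"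
    using measurable_add_dim[of j "I - {j}" "\<lambda>_. lborel"] I(2) by (simp add: insert_absorb)
  show "distr (lborel_PiM (I - {j}) \<Otimes>\<^sub>M lborel) (lborel_PiM I) (\<lambda>(q, t). q(j := t)) = lborel_PiM I"
  proof (rule measure_eqI)
    fix A assume "A \<in> sets (distr (lborel_PiM (I - {j}) \<Otimes>\<^sub>M lborel) (lborel_PiM I) (\<lambda>(q, t). q(j := t)))"
    then have A[measurable]: "A \<in> sets (lborel_PiM I)" by simp
    let ?D = "distr (lborel_PiM K \<Otimes>\<^sub>M lborel) (lborel_PiM I) (\<lambda>(q, t). q(j := t))"
    have "(\<lambda>z. indicator A (case z of (q, t) \<Rightarrow> q(j := t)) :: ennreal) \<in> borel_measurable (lborel_PiM K \<Otimes>\<^sub>M lborel)"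
      using E unfolding K_def by measurable
    note fst = lborel.nn_integral_fst[OF this]
    have "emeasure ?D A = (\<integral>\<^sup>+ z. indicator A z \<partial>?D)"
      using A by simp
    also have "\<dots> = (\<integral>\<^sup>+ z. indicator A (case z of (q, t) \<Rightarrow> q(j := t)) \<partial>(lborel_PiM K \<Otimes>\<^sub>M lborel))"
      using E unfolding K_def by (rule nn_integral_distr) simp
    also have "\<dots> = (\<integral>\<^sup>+ q. (\<integral>\<^sup>+ t. indicator A (q(j := t)) \<partial>lborel) \<partial>lborel_PiM K)"
      using fst by simp
    also have "\<dots> = (\<integral>\<^sup>+ z. indicator A z \<partial>lborel_PiM I)"
      using A unfolding IK(1) by (subst product_nn_integral_insert[OF IK(2,3)]) simp_all
    also have "\<dots> = emeasure (lborel_PiM I) A"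
      using A by simp
    finally show "emeasure (distr (lborel_PiM (I - {j}) \<Otimes>\<^sub>M lborel) (lborel_PiM I) (\<lambda>(q, t). q(j := t))) A
        = emeasure (lborel_PiM I) A"
      by (simp add: K_def)
  qed simp
qed

lemma gmul_exp_coord_measure_preserving:
  assumes ca: "carnot_algebra N m \<sigma> c" and j: "j < N"
  shows "(\<lambda>y. gmul N m c (y(j := 0)) (exp_coord N j (y j)))
      \<in> measurable (lborel_PiM {..<N}) (lborel_PiM {..<N})"
    and "distr (lborel_PiM {..<N}) (lborel_PiM {..<N})
      (\<lambda>y. gmul N m c (y(j := 0)) (exp_coord N j (y j))) = lborel_PiM {..<N}"
proof -
  show meas: "(\<lambda>y. gmul N m c (y(j := 0)) (exp_coord N j (y j)))
      \<in> measurable (lborel_PiM {..<N}) (lborel_PiM {..<N})"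
  proof (rule measurable_gmul)
    fix i assume i: "i < N"
    then show "(\<lambda>y. (y(j := 0)) i) \<in> borel_measurable (lborel_PiM {..<N})"
      by (cases "i = j") simp_all
    show "(\<lambda>y. exp_coord N j (y j) i) \<in> borel_measurable (lborel_PiM {..<N})"
      using i j by (cases "i = j") (simp_all add: exp_coord_def)
  qed
  show "distr (lborel_PiM {..<N}) (lborel_PiM {..<N})
      (\<lambda>y. gmul N m c (y(j := 0)) (exp_coord N j (y j))) = lborel_PiM {..<N}"
  proof (rule lborel_PiM_triangular_measure_preserving[OF meas])
    fix l and y y' :: "nat \<Rightarrow> real" assume l: "l < N" and agree: "\<And>i. i < l \<Longrightarrow> y i = y' i"
    have linear: "(z(j := 0)) l + exp_coord N j (z j) l = z l" for z :: "nat \<Rightarrow> real"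
      using l by (simp add: exp_coord_def)
    have "gmul N m c (y(j := 0)) (exp_coord N j (y j)) l - (y(j := 0)) l - exp_coord N j (y j) l
        = gmul N m c (y'(j := 0)) (exp_coord N j (y' j)) l - (y'(j := 0)) l - exp_coord N j (y' j) l"
      by (rule gmul_sub_cong_lower[OF ca l]) (use agree in \<open>auto simp: exp_coord_def\<close>)
    then show "gmul N m c (y(j := 0)) (exp_coord N j (y j)) l - y l
        = gmul N m c (y'(j := 0)) (exp_coord N j (y' j)) l - y' l"
      using linear[of y] linear[of y'] by (simp add: algebra_simps)
  qed
qed

section \<open>Fubini's theorem for completed measures\<close>

lemma borel_measurable_completion_AE_eq:
  fixes f g :: "'a \<Rightarrow> real"
  assumes g: "g \<in> borel_measurable M" and ae: "AE x in M. f x = g x"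
  shows "f \<in> borel_measurable (completion M)"
proof (rule measurableI)
  fix B :: "real set" assume B: "B \<in> sets borel"
  have A: "g -` B \<inter> space M \<in> sets (completion M)"
    using g B by (auto intro: measurable_sets)
  have "AE x in completion M. (x \<in> g -` B \<inter> space M) \<longleftrightarrow> (x \<in> f -` B \<inter> space M)"
    using ae by (intro AE_completion) (auto elim: eventually_mono)
  then have "f -` B \<inter> space M \<in> sets (completion M)"
    by (rule completion.in_sets_AE[OF _ A]) auto
  then show "f -` B \<inter> space (completion M) \<in> sets (completion M)" by simp
qed simp

lemma integrable_completion_AE_eq:
  fixes f g :: "'a \<Rightarrow> real"
  assumes g: "g \<in> borel_measurable M" and ae: "AE x in M. f x = g x"
  shows "integrable (completion M) f \<longleftrightarrow> integrable M g"
proof -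
  have "integrable (completion M) f \<longleftrightarrow> integrable (completion M) g"
    using borel_measurable_completion_AE_eq[OF g ae] measurable_completion[OF g] AE_completion[OF ae]
    by (intro integrable_cong_AE) auto
  also have "\<dots> \<longleftrightarrow> integrable M g" by (rule integrable_completion[OF g])
  finally show ?thesis .
qed

lemma integral_completion_AE_eq:
  fixes f g :: "'a \<Rightarrow> real"
  assumes g: "g \<in> borel_measurable M" and ae: "AE x in M. f x = g x"
  shows "integral\<^sup>L (completion M) f = integral\<^sup>L M g"
proof -
  have "integral\<^sup>L (completion M) f = integral\<^sup>L (completion M) g"
    using borel_measurable_completion_AE_eq[OF g ae] measurable_completion[OF g] AE_completion[OF ae]
    by (intro integral_cong_AE) auto
  also have "\<dots> = integral\<^sup>L M g" by (rule integral_completion[OF g])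
  finally show ?thesis .
qed

lemma
  fixes f :: "'b \<Rightarrow> real"
  assumes \<Phi>: "\<Phi> \<in> measurable M' M" and preserving: "distr M' M \<Phi> = M"
    and f: "integrable (completion M) f"
  shows integrable_completion_measure_preserving: "integrable (completion M') (\<lambda>x. f (\<Phi> x))"
    and integral_completion_measure_preserving:
      "integral\<^sup>L (completion M') (\<lambda>x. f (\<Phi> x)) = integral\<^sup>L (completion M) f"
proof -
  obtain g where g[measurable]: "g \<in> borel_measurable M" and fg: "AE x in M. f x = g x"
    using completion_ex_borel_measurable_real[OF borel_measurable_integrable[OF f]] by blast
  have ae: "AE x in M'. f (\<Phi> x) = g (\<Phi> x)"
    by (rule AE_distrD[OF \<Phi>]) (subst preserving, rule fg)
  have g\<Phi>: "(\<lambda>x. g (\<Phi> x)) \<in> borel_measurable M'"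
    using \<Phi> by measurable
  note completion_eq = integrable_completion_AE_eq[OF g\<Phi> ae] integral_completion_AE_eq[OF g\<Phi> ae]
  have "integrable M g" "integral\<^sup>L (completion M) f = integral\<^sup>L M g"
    using f integrable_completion_AE_eq[OF g fg] integral_completion_AE_eq[OF g fg] by simp_all
  then show "integrable (completion M') (\<lambda>x. f (\<Phi> x))"
    and "integral\<^sup>L (completion M') (\<lambda>x. f (\<Phi> x)) = integral\<^sup>L (completion M) f"
    using completion_eq integrable_distr_eq[OF \<Phi> g] integral_distr[OF \<Phi> g] preserving by simp_all
qed

lemma (in pair_sigma_finite) completion_Fubini_fst:
  fixes f :: "'a \<times> 'b \<Rightarrow> real"
  assumes f: "integrable (completion (M1 \<Otimes>\<^sub>M M2)) f"
  shows "AE x in M1. integrable (completion M2) (\<lambda>y. f (x, y))"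
    and "integrable (completion M1) (\<lambda>x. \<integral>y. f (x, y) \<partial>completion M2)"
    and "(\<integral>x. (\<integral>y. f (x, y) \<partial>completion M2) \<partial>completion M1) = integral\<^sup>L (completion (M1 \<Otimes>\<^sub>M M2)) f"
proof -
  obtain g where g[measurable]: "g \<in> borel_measurable (M1 \<Otimes>\<^sub>M M2)"
    and fg: "AE z in M1 \<Otimes>\<^sub>M M2. f z = g z"
    using completion_ex_borel_measurable_real[OF borel_measurable_integrable[OF f]] by blast
  have g_int: "integrable (M1 \<Otimes>\<^sub>M M2) g"
    using f integrable_completion_AE_eq[OF g fg] by simp
  have slices: "AE x in M1. integrable (completion M2) (\<lambda>y. f (x, y))
      \<and> (\<integral>y. f (x, y) \<partial>completion M2) = (\<integral>y. g (x, y) \<partial>M2)"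
    using AE_pair[OF fg] AE_integrable_fst'[OF g_int]
  proof eventually_elim
    case (elim x)
    have "(\<lambda>y. g (x, y)) \<in> borel_measurable M2"
      using elim(2) by (rule borel_measurable_integrable)
    then show ?case
      using integrable_completion_AE_eq[OF _ elim(1)] integral_completion_AE_eq[OF _ elim(1)] elim(2)
      by simp
  qed
  then show "AE x in M1. integrable (completion M2) (\<lambda>y. f (x, y))"
    by (auto elim: eventually_mono)
  have ae: "AE x in M1. (\<integral>y. f (x, y) \<partial>completion M2) = (\<integral>y. g (x, y) \<partial>M2)"
    using slices by (auto elim: eventually_mono)
  have int: "integrable M1 (\<lambda>x. \<integral>y. g (x, y) \<partial>M2)"
    by (rule integrable_fst'[OF g_int])
  note meas = borel_measurable_integrable[OF int]
  show "integrable (completion M1) (\<lambda>x. \<integral>y. f (x, y) \<partial>completion M2)"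
    using integrable_completion_AE_eq[OF meas ae] int by simp
  have "(\<integral>x. (\<integral>y. f (x, y) \<partial>completion M2) \<partial>completion M1) = (\<integral>x. (\<integral>y. g (x, y) \<partial>M2) \<partial>M1)"
    by (rule integral_completion_AE_eq[OF meas ae])
  also have "\<dots> = integral\<^sup>L (M1 \<Otimes>\<^sub>M M2) g"
    by (rule integral_fst'[OF g_int])
  also have "\<dots> = integral\<^sup>L (completion (M1 \<Otimes>\<^sub>M M2)) f"
    by (rule integral_completion_AE_eq[OF g fg, symmetric])
  finally show "(\<integral>x. (\<integral>y. f (x, y) \<partial>completion M2) \<partial>completion M1) = integral\<^sup>L (completion (M1 \<Otimes>\<^sub>M M2)) f" .
qed

lemma (in pair_sigma_finite) completion_Fubini_snd:
  fixes f :: "'a \<times> 'b \<Rightarrow> real"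
  assumes f: "integrable (completion (M1 \<Otimes>\<^sub>M M2)) f"
  shows "AE y in M2. integrable (completion M1) (\<lambda>x. f (x, y))"
    and "integrable (completion M2) (\<lambda>y. \<integral>x. f (x, y) \<partial>completion M1)"
    and "(\<integral>y. (\<integral>x. f (x, y) \<partial>completion M1) \<partial>completion M2) = integral\<^sup>L (completion (M1 \<Otimes>\<^sub>M M2)) f"
proof -
  interpret swapped: pair_sigma_finite M2 M1 ..
  have swap: "(\<lambda>(y, x). (x, y)) \<in> measurable (M2 \<Otimes>\<^sub>M M1) (M1 \<Otimes>\<^sub>M M2)"
    by (rule measurable_pair_swap')
  note preserving = distr_pair_swap[symmetric]
  have "integrable (completion (M2 \<Otimes>\<^sub>M M1)) (\<lambda>z. f (case z of (y, x) \<Rightarrow> (x, y)))"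
    by (rule integrable_completion_measure_preserving[OF swap preserving f])
  note swapped_Fubini = swapped.completion_Fubini_fst[OF this, simplified]
  show "AE y in M2. integrable (completion M1) (\<lambda>x. f (x, y))"
    and "integrable (completion M2) (\<lambda>y. \<integral>x. f (x, y) \<partial>completion M1)"
    using swapped_Fubini(1,2) by simp_all
  show "(\<integral>y. (\<integral>x. f (x, y) \<partial>completion M1) \<partial>completion M2) = integral\<^sup>L (completion (M1 \<Otimes>\<^sub>M M2)) f"
    using swapped_Fubini(3) integral_completion_measure_preserving[OF swap preserving f] by simp
qed

lemma integrable_density_const_iff:
  fixes \<phi> :: "'a \<Rightarrow> real"
  assumes "\<Theta> > 0"
  shows "integrable (density M (\<lambda>_. ennreal \<Theta>)) \<phi> \<longleftrightarrow> integrable M \<phi>"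
proof (cases "\<phi> \<in> borel_measurable M")
  case True
  then show ?thesis using integrable_density[OF True, of "\<lambda>_. \<Theta>"] assms by simp
qed (auto dest: borel_measurable_integrable)

lemma integral_density_const:
  fixes \<phi> :: "'a \<Rightarrow> real"
  assumes "\<Theta> > 0"
  shows "integral\<^sup>L (density M (\<lambda>_. ennreal \<Theta>)) \<phi> = \<Theta> * integral\<^sup>L M \<phi>"
proof (cases "integrable M \<phi>")
  case True
  then show ?thesis
    using integral_density[OF borel_measurable_integrable[OF True], of "\<lambda>_. \<Theta>"] assms by simp
next
  case False
  then show ?thesis
    using integrable_density_const_iff[OF assms, of M \<phi>] by (simp add: not_integrable_integral_eq)
qed

section \<open>The plane and the main theorem\<close>

definition plane_measure :: "nat \<Rightarrow> nat \<Rightarrow> vec measure" where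
  "plane_measure N j = distr (lborel_PiM ({..<N} - {j}))
     (restrict_space (lborel_PiM {..<N}) (Pi_plane N j)) (\<lambda>p. p(j := 0))"

lemma measurable_plane_embedding:
  assumes "j < N"
  shows "(\<lambda>q. q(j := 0)) \<in> measurable (lborel_PiM ({..<N} - {j}))
    (restrict_space (lborel_PiM {..<N}) (Pi_plane N j))"
proof (rule measurable_restrict_space2)
  show "(\<lambda>q. q(j := 0)) \<in> space (lborel_PiM ({..<N} - {j})) \<rightarrow> Pi_plane N j"
    using assms by (auto simp: Pi_plane_def space_PiM PiE_def extensional_def)
  show "(\<lambda>q. q(j := 0)) \<in> measurable (lborel_PiM ({..<N} - {j})) (lborel_PiM {..<N})"
  proof (rule measurable_lborel_PiM_componentwise)
    fix i assume "i \<in> {..<N}"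
    then show "(\<lambda>q. (q(j := 0)) i) \<in> borel_measurable (lborel_PiM ({..<N} - {j}))"
      by (cases "i = j") simp_all
  qed (use assms in \<open>auto simp: space_PiM PiE_def extensional_def\<close>)
qed

lemma sigma_finite_plane_measure:
  assumes "j < N"
  shows "sigma_finite_measure (plane_measure N j)"
proof -
  let ?K = "{..<N} - {j}"
  interpret product_sigma_finite "\<lambda>_::nat. lborel :: real measure" by standard
  have \<rho>: "(\<lambda>p. restrict p ?K)
      \<in> measurable (restrict_space (lborel_PiM {..<N}) (Pi_plane N j)) (lborel_PiM ?K)"
    by (rule measurable_restrict) (rule measurable_restrict_space1, simp)
  have "distr (plane_measure N j) (lborel_PiM ?K) (\<lambda>p. restrict p ?K)
      = distr (lborel_PiM ?K) (lborel_PiM ?K) (\<lambda>q. restrict (q(j := 0)) ?K)"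
    unfolding plane_measure_def using \<rho> measurable_plane_embedding[OF assms]
    by (subst distr_distr) (simp_all add: comp_def)
  also have "\<dots> = distr (lborel_PiM ?K) (lborel_PiM ?K) (\<lambda>q. q)"
    by (rule distr_cong) (auto simp: space_PiM PiE_def extensional_def restrict_def)
  finally have restrict_preserving:
      "distr (plane_measure N j) (lborel_PiM ?K) (\<lambda>p. restrict p ?K) = lborel_PiM ?K"
    by simp
  have "sigma_finite_measure (lborel_PiM ?K)"
    by (rule sigma_finite) simp
  then have "sigma_finite_measure (distr (plane_measure N j) (lborel_PiM ?K) (\<lambda>p. restrict p ?K))"
    by (simp only: restrict_preserving)
  moreover have "(\<lambda>p. restrict p ?K) \<in> measurable (plane_measure N j) (lborel_PiM ?K)"
    using \<rho> by (simp add: plane_measure_def)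
  ultimately show ?thesis by (rule sigma_finite_measure_distr)
qed

lemma measurable_gmul_exp_coord_on_plane:
  "(\<lambda>(p, t). gmul N m c p (exp_coord N j t))
    \<in> measurable (restrict_space (lborel_PiM {..<N}) (Pi_plane N j) \<Otimes>\<^sub>M lborel) (lborel_PiM {..<N})"
proof -
  let ?R = "restrict_space (lborel_PiM {..<N}) (Pi_plane N j)"
  have "(\<lambda>z. gmul N m c (fst z) (exp_coord N j (snd z))) \<in> measurable (?R \<Otimes>\<^sub>M lborel) (lborel_PiM {..<N})"
  proof (rule measurable_gmul)
    fix i assume i: "i < N"
    have "(\<lambda>p. p i) \<in> borel_measurable ?R"
      by (rule measurable_restrict_space1) (simp add: i)
    then show "(\<lambda>z. fst z i) \<in> borel_measurable (?R \<Otimes>\<^sub>M lborel)"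
      by (rule measurable_compose[OF measurable_fst])
    show "(\<lambda>z. exp_coord N j (snd z) i) \<in> borel_measurable (?R \<Otimes>\<^sub>M lborel)"
      using i by (cases "i = j") (simp_all add: exp_coord_def)
  qed
  then show ?thesis by (simp add: case_prod_beta')
qed

lemma plane_measure_pair_lborel:
  assumes "j < N"
  shows "plane_measure N j \<Otimes>\<^sub>M lborel = distr (lborel_PiM ({..<N} - {j}) \<Otimes>\<^sub>M lborel)
    (restrict_space (lborel_PiM {..<N}) (Pi_plane N j) \<Otimes>\<^sub>M lborel) (\<lambda>(q, t). (q(j := 0), t))"
proof -
  have "plane_measure N j \<Otimes>\<^sub>M lborel = plane_measure N j \<Otimes>\<^sub>M distr lborel lborel (\<lambda>t. t)"
    by simp
  also have "\<dots> = distr (lborel_PiM ({..<N} - {j}) \<Otimes>\<^sub>M lborel)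
      (restrict_space (lborel_PiM {..<N}) (Pi_plane N j) \<Otimes>\<^sub>M lborel) (\<lambda>(q, t). (q(j := 0), t))"
    unfolding plane_measure_def
    by (rule pair_measure_distr[OF measurable_plane_embedding[OF assms]])
      (simp_all add: lborel.sigma_finite_measure_axioms)
  finally show ?thesis .
qed

lemma plane_gmul_exp_coord_measure_preserving:
  assumes ca: "carnot_algebra N m \<sigma> c" and j: "j < N"
  shows "(\<lambda>(p, t). gmul N m c p (exp_coord N j t))
      \<in> measurable (plane_measure N j \<Otimes>\<^sub>M lborel) (lborel_PiM {..<N})"
    and "distr (plane_measure N j \<Otimes>\<^sub>M lborel) (lborel_PiM {..<N})
      (\<lambda>(p, t). gmul N m c p (exp_coord N j t)) = lborel_PiM {..<N}"
proof -
  let ?K = "{..<N} - {j}" and ?R = "restrict_space (lborel_PiM {..<N}) (Pi_plane N j)"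
  let ?M = "lborel_PiM {..<N}" and ?\<Psi> = "\<lambda>(p, t). gmul N m c p (exp_coord N j t)"
  note \<Psi>_meas = measurable_gmul_exp_coord_on_plane[of N m c j]
  have sets: "sets (plane_measure N j \<Otimes>\<^sub>M lborel) = sets (?R \<Otimes>\<^sub>M lborel)"
    by (rule sets_pair_measure_cong) (simp_all add: plane_measure_def)
  show "?\<Psi> \<in> measurable (plane_measure N j \<Otimes>\<^sub>M lborel) ?M"
    unfolding measurable_cong_sets[OF sets refl] by (rule \<Psi>_meas)
  note \<iota>[measurable] = measurable_plane_embedding[OF j]
  have embed: "(\<lambda>(q, t). (q(j := 0), t)) \<in> measurable (lborel_PiM ?K \<Otimes>\<^sub>M lborel) (?R \<Otimes>\<^sub>M lborel)"
    by measurable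
  note insert = lborel_PiM_insert_measure_preserving[of "{..<N}" j]
  note triangular = gmul_exp_coord_measure_preserving[OF ca j]
  have "distr (plane_measure N j \<Otimes>\<^sub>M lborel) ?M ?\<Psi>
      = distr (lborel_PiM ?K \<Otimes>\<^sub>M lborel) ?M (\<lambda>(q, t). gmul N m c (q(j := 0)) (exp_coord N j t))"
    unfolding plane_measure_pair_lborel[OF j] using embed \<Psi>_meas
    by (subst distr_distr) (auto intro!: distr_cong)
  also have "\<dots> = distr (distr (lborel_PiM ?K \<Otimes>\<^sub>M lborel) ?M (\<lambda>(q, t). q(j := t))) ?M
      (\<lambda>y. gmul N m c (y(j := 0)) (exp_coord N j (y j)))"
    using insert(1) triangular(1) j by (subst distr_distr) (auto intro!: distr_cong)
  also have "\<dots> = ?M"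
    using insert(2) triangular(2) j by simp
  finally show "distr (plane_measure N j \<Otimes>\<^sub>M lborel) ?M ?\<Psi> = ?M" .
qed

theorem mainTheorem2:
  fixes N m j :: nat and \<sigma> :: "nat \<Rightarrow> nat" and c :: "nat \<Rightarrow> nat \<Rightarrow> nat \<Rightarrow> real"
    and \<Theta>G \<Theta>P :: real and f :: "vec \<Rightarrow> real"
  assumes "carnot_algebra N m \<sigma> c" and "j < N" and "\<sigma> j = 1"
    and "\<Theta>G > 0" and "\<Theta>P > 0"
    and "integrable (H_G \<Theta>G N) f"
  shows "(AE p in H_Pi \<Theta>P N j.
            integrable lebesgue (\<lambda>t. f (gmul N m c p (exp_coord N j t))))
       \<and> (AE t in lebesgue.
            integrable (H_Pi \<Theta>P N j) (\<lambda>p. f (gmul N m c p (exp_coord N j t))))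
       \<and> integrable (H_Pi \<Theta>P N j)
            (\<lambda>p. \<integral>t. f (gmul N m c p (exp_coord N j t)) \<partial>lebesgue)
       \<and> integrable lebesgue
            (\<lambda>t. \<integral>p. f (gmul N m c p (exp_coord N j t)) \<partial>H_Pi \<Theta>P N j)
       \<and> (\<integral>p. (\<integral>t. f (gmul N m c p (exp_coord N j t)) \<partial>lebesgue) \<partial>H_Pi \<Theta>P N j)
         = (\<integral>t. (\<integral>p. f (gmul N m c p (exp_coord N j t)) \<partial>H_Pi \<Theta>P N j) \<partial>lebesgue)
       \<and> (\<integral>t. (\<integral>p. f (gmul N m c p (exp_coord N j t)) \<partial>H_Pi \<Theta>P N j) \<partial>lebesgue)
         = \<Theta>P / \<Theta>G * (\<integral>x. f x \<partial>H_G \<Theta>G N)"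
proof -
  note ca = assms(1) and j = assms(2) and \<Theta>G = assms(4) and \<Theta>P = assms(5)
  let ?D = "plane_measure N j" and ?\<Psi> = "\<lambda>(p, t). gmul N m c p (exp_coord N j t)"
  interpret D: sigma_finite_measure ?D by (rule sigma_finite_plane_measure[OF j])
  interpret pair_sigma_finite ?D lborel ..
  note \<Psi> = plane_gmul_exp_coord_measure_preserving[OF ca j]
  have f_int: "integrable (completion (lborel_PiM {..<N})) f"
    using assms(6) integrable_density_const_iff[OF \<Theta>G, of "completion (lborel_PiM {..<N})" f]
    by (simp add: H_G_def lebN_def)
  note h_int = integrable_completion_measure_preserving[OF \<Psi> f_int]
  note Fubini = completion_Fubini_fst[OF h_int, simplified] completion_Fubini_snd[OF h_int, simplified]
  have H_Pi_eq: "H_Pi \<Theta>P N j = density (completion ?D) (\<lambda>_. ennreal \<Theta>P)"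
    by (simp add: H_Pi_def lebPlane_def plane_measure_def)
  have H_G_integral:
      "(\<integral>x. f x \<partial>H_G \<Theta>G N) = \<Theta>G * integral\<^sup>L (completion (?D \<Otimes>\<^sub>M lborel)) (\<lambda>z. f (?\<Psi> z))"
    using integral_completion_measure_preserving[OF \<Psi> f_int] integral_density_const[OF \<Theta>G]
    by (simp add: H_G_def lebN_def)
  show ?thesis
    unfolding H_Pi_eq H_G_integral integral_density_const[OF \<Theta>P] integrable_density_const_iff[OF \<Theta>P]
    using Fubini \<Theta>G by (auto simp: AE_density AE_completion integrable_mult_right)
qed

end
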